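(* Let $A$ be a meet-semilattice and $\kappa$ a regular cardinal. Then $A$ is a complete lattice that is a $\kappa$-frame if and only if $\mathcal{BL}_\kappa(\mathcal{DM} A)=A$.
   Context: $\mathcal{DM} A$ is the complete lattice of normal ideals of $A$. An existing join $\bigvee S$ is distributive if $a\wedge\bigvee S=\bigvee\{a\wedge s:s\in S\}$ for all $a$. $\mathcal{BL} A$ is the frame of D-ideals of $A$ (downsets containing $\bigvee S$ for every subset $S$ with distributive join), and $A$ is identified with $\{{\downarrow}a:a\in A\}\subseteq\mathcal{DM} A\subseteq\mathcal{BL} A$. $\mathcal{BL}_\kappa(\mathcal{DM} A)$ is the sub-$\kappa$-frame of $\mathcal{BL} A$ generated by $\mathcal{DM} A$ (closure under finite meets and joins of fewer than $\kappa$ elements computed in $\mathcal{BL} A$). A $\kappa$-frame is a meet-semilattice in which all joins of fewer than $\kappa$ elements exist and are distributive. *)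

theory Defs
  imports Main
begin

definition upper_bounds :: "'a::order set \<Rightarrow> 'a set" where
  "upper_bounds S = {x. \<forall>s\<in>S. s \<le> x}"

definition lower_bounds :: "'a::order set \<Rightarrow> 'a set" where
  "lower_bounds S = {x. \<forall>s\<in>S. x \<le> s}"

definition is_join :: "'a::order set \<Rightarrow> 'a \<Rightarrow> bool" where
  "is_join S x \<longleftrightarrow> x \<in> upper_bounds S \<and> (\<forall>y\<in>upper_bounds S. x \<le> y)"

definition is_dist_join :: "'a::semilattice_inf set \<Rightarrow> 'a \<Rightarrow> bool" where
  "is_dist_join S x \<longleftrightarrow> is_join S x \<and> (\<forall>a. is_join ((\<lambda>s. inf a s) ` S) (inf a x))"

definition DM :: "'a::order set set" where
  "DM = {I. I = lower_bounds (upper_bounds I)}"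

definition downset :: "'a::order set \<Rightarrow> bool" where
  "downset I \<longleftrightarrow> (\<forall>x\<in>I. \<forall>y. y \<le> x \<longrightarrow> y \<in> I)"

definition D_ideal :: "'a::semilattice_inf set \<Rightarrow> bool" where
  "D_ideal I \<longleftrightarrow> downset I \<and> (\<forall>S x. S \<subseteq> I \<and> is_dist_join S x \<longrightarrow> x \<in> I)"

definition BL :: "'a::semilattice_inf set set" where
  "BL = {I. D_ideal I}"

definition BL_Join :: "'a::semilattice_inf set set \<Rightarrow> 'a set" where
  "BL_Join \<F> = \<Inter>{I. D_ideal I \<and> \<Union>\<F> \<subseteq> I}"

text \<open>BL_kappa(DM A): the sub-kappa-frame of BL A generated by DM A
  (closure of DM A under finite meets, i.e. intersections, and joins in BL A
   of fewer than kappa elements)\<close>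
inductive_set BL_kappa_DM :: "'k rel \<Rightarrow> 'a::semilattice_inf set set" for \<kappa> :: "'k rel" where
  base: "I \<in> DM \<Longrightarrow> I \<in> BL_kappa_DM \<kappa>"
| top: "UNIV \<in> BL_kappa_DM \<kappa>"
| meet: "I \<in> BL_kappa_DM \<kappa> \<Longrightarrow> J \<in> BL_kappa_DM \<kappa> \<Longrightarrow> I \<inter> J \<in> BL_kappa_DM \<kappa>"
| join: "(\<And>F. F \<in> \<F> \<Longrightarrow> F \<in> BL_kappa_DM \<kappa>) \<Longrightarrow> (card_of \<F>, \<kappa>) \<in> ordLess \<Longrightarrow> BL_Join \<F> \<in> BL_kappa_DM \<kappa>"

definition complete_lattice_ord :: "'a::order itself \<Rightarrow> bool" where
  "complete_lattice_ord _ \<longleftrightarrow> (\<forall>S::'a set. \<exists>x. is_join S x)"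

definition kappa_frame :: "'k rel \<Rightarrow> 'a::semilattice_inf itself \<Rightarrow> bool" where
  "kappa_frame \<kappa> _ \<longleftrightarrow> (\<forall>S::'a set. (card_of S, \<kappa>) \<in> ordLess \<longrightarrow> (\<exists>x. is_dist_join S x))"

end

theory Submission
  imports Defs
begin

text \<open>Identify a \<in> A with the principal ideal {..a}. A join of S exists iff the normal ideal
  generated by S is principal, so completeness of A says exactly that DM A consists of principal
  ideals. For the \<kappa>-frame condition the key observation is that, for a, y \<in> A, the set
  {z. a \<sqinter> z \<le> y} is a D-ideal; hence the join of the principal ideals of S in BL A is a
  principal ideal {..x} iff x is a distributive join of S. Therefore the generated
  sub-\<kappa>-frame collapses to A precisely when A is complete and a \<kappa>-frame.\<close>

lemma D_ideal_atMost: "D_ideal {..x::'a::semilattice_inf}"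
  unfolding D_ideal_def downset_def is_dist_join_def is_join_def upper_bounds_def
  by auto

lemma D_ideal_inf_le: "D_ideal {z::'a::semilattice_inf. inf a z \<le> y}"
  unfolding D_ideal_def downset_def
proof (intro conjI ballI allI impI)
  fix z w :: 'a
  assume "z \<in> {z. inf a z \<le> y}" "w \<le> z"
  then show "w \<in> {z. inf a z \<le> y}" by (auto intro: order_trans inf_mono)
next
  fix T t
  assume "T \<subseteq> {z. inf a z \<le> y} \<and> is_dist_join T t"
  then have "T \<subseteq> {z. inf a z \<le> y}" "is_join ((\<lambda>s. inf a s) ` T) (inf a t)"
    unfolding is_dist_join_def by auto
  then show "t \<in> {z. inf a z \<le> y}" unfolding is_join_def upper_bounds_def by auto
qed

lemma UNIV_in_DM: "UNIV \<in> DM"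
  unfolding DM_def lower_bounds_def upper_bounds_def by auto

lemma atMost_in_DM: "{..a::'a::order} \<in> DM"
  unfolding DM_def lower_bounds_def upper_bounds_def by auto

lemma lower_bounds_upper_bounds_in_DM: "lower_bounds (upper_bounds S) \<in> DM"
  unfolding DM_def lower_bounds_def upper_bounds_def by auto

lemma is_join_iff_lower_bounds_upper_bounds:
  "is_join S a \<longleftrightarrow> lower_bounds (upper_bounds S) = {..a::'a::order}"
  unfolding is_join_def lower_bounds_def upper_bounds_def set_eq_iff
  by (auto intro: order_trans)

lemma complete_lattice_ord_iff_DM_subset:
  "complete_lattice_ord TYPE('a::order) \<longleftrightarrow> (DM :: 'a set set) \<subseteq> range (\<lambda>a. {..a})"
proof
  assume "complete_lattice_ord TYPE('a)"
  then show "(DM :: 'a set set) \<subseteq> range (\<lambda>a. {..a})"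
    unfolding complete_lattice_ord_def DM_def is_join_iff_lower_bounds_upper_bounds by force
next
  assume "(DM :: 'a set set) \<subseteq> range (\<lambda>a. {..a})"
  then show "complete_lattice_ord TYPE('a)"
    using lower_bounds_upper_bounds_in_DM
    unfolding complete_lattice_ord_def is_join_iff_lower_bounds_upper_bounds by blast
qed

lemma BL_Join_upper: "F \<in> \<F> \<Longrightarrow> F \<subseteq> BL_Join \<F>"
  unfolding BL_Join_def by auto

lemma BL_Join_least: "D_ideal I \<Longrightarrow> \<Union>\<F> \<subseteq> I \<Longrightarrow> BL_Join \<F> \<subseteq> I"
  unfolding BL_Join_def by auto

lemma BL_Join_atMost_le_iff:
  "BL_Join ((\<lambda>a. {..a}) ` S) \<subseteq> {..y::'a::semilattice_inf} \<longleftrightarrow> y \<in> upper_bounds S"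
proof
  assume le: "BL_Join ((\<lambda>a. {..a}) ` S) \<subseteq> {..y}"
  have "s \<le> y" if "s \<in> S" for s
    using BL_Join_upper[of "{..s}"] that le by blast
  then show "y \<in> upper_bounds S" unfolding upper_bounds_def by blast
next
  assume "y \<in> upper_bounds S"
  then have "\<Union>((\<lambda>a. {..a}) ` S) \<subseteq> {..y}"
    unfolding upper_bounds_def by (auto intro: order_trans)
  then show "BL_Join ((\<lambda>a. {..a}) ` S) \<subseteq> {..y}"
    by (rule BL_Join_least[OF D_ideal_atMost])
qed

lemma BL_Join_atMost_eq_iff:
  "BL_Join ((\<lambda>a. {..a}) ` S) = {..x::'a::semilattice_inf} \<longleftrightarrow> is_dist_join S x"
proof
  assume x: "BL_Join ((\<lambda>a. {..a}) ` S) = {..x}"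
  then have "is_join S x"
    using BL_Join_atMost_le_iff[of S] unfolding is_join_def by auto
  moreover have "is_join ((\<lambda>s. inf a s) ` S) (inf a x)" for a
    unfolding is_join_def
  proof
    show "inf a x \<in> upper_bounds ((\<lambda>s. inf a s) ` S)"
      using \<open>is_join S x\<close> unfolding is_join_def upper_bounds_def by (auto intro: le_infI2)
    show "\<forall>y\<in>upper_bounds ((\<lambda>s. inf a s) ` S). inf a x \<le> y"
    proof
      fix y assume "y \<in> upper_bounds ((\<lambda>s. inf a s) ` S)"
      then have "\<Union>((\<lambda>a. {..a}) ` S) \<subseteq> {z. inf a z \<le> y}"
        unfolding upper_bounds_def by (auto intro: order_trans inf_mono)
      then have "BL_Join ((\<lambda>a. {..a}) ` S) \<subseteq> {z. inf a z \<le> y}"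
        by (rule BL_Join_least[OF D_ideal_inf_le])
      then show "inf a x \<le> y" using x by auto
    qed
  qed
  ultimately show "is_dist_join S x" unfolding is_dist_join_def by blast
next
  assume x: "is_dist_join S x"
  show "BL_Join ((\<lambda>a. {..a}) ` S) = {..x}"
  proof
    show "BL_Join ((\<lambda>a. {..a}) ` S) \<subseteq> {..x}"
      using x BL_Join_atMost_le_iff unfolding is_dist_join_def is_join_def by blast
    have "x \<in> I" if "D_ideal I" "\<Union>((\<lambda>a. {..a}) ` S) \<subseteq> I" for I
      using that x unfolding D_ideal_def by blast
    then show "{..x} \<subseteq> BL_Join ((\<lambda>a. {..a}) ` S)"
      unfolding BL_Join_def D_ideal_def downset_def by auto
  qed
qed

lemma kappa_frame_iff_BL_Join_atMost:
  "kappa_frame \<kappa> TYPE('a::semilattice_inf) \<longleftrightarrow>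
    (\<forall>S::'a set. (card_of S, \<kappa>) \<in> ordLess \<longrightarrow> BL_Join ((\<lambda>a. {..a}) ` S) \<in> range (\<lambda>a. {..a}))"
  unfolding kappa_frame_def using BL_Join_atMost_eq_iff by (metis rangeE rangeI)

lemma card_of_atMost_image_ordLess:
  assumes "(card_of S, \<kappa>) \<in> ordLess"
  shows "(card_of ((\<lambda>a. {..a::'a::order}) ` S), \<kappa>) \<in> ordLess"
  using card_of_image ordLeq_ordLess_trans assms by blast

lemma principal_family_card_of_ordLess:
  fixes \<F> :: "'a::order set set"
  assumes "\<F> \<subseteq> range (\<lambda>a. {..a})" "(card_of \<F>, \<kappa>) \<in> ordLess"
  obtains S where "\<F> = (\<lambda>a. {..a}) ` S" "(card_of S, \<kappa>) \<in> ordLess"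
proof
  let ?S = "{a. {..a} \<in> \<F>}"
  show "\<F> = (\<lambda>a. {..a}) ` ?S" using assms(1) by auto
  have "(card_of ?S, card_of \<F>) \<in> ordLeq"
    by (rule card_of_ordLeqI[of "\<lambda>a. {..a}"]) (auto simp: inj_on_def)
  then show "(card_of ?S, \<kappa>) \<in> ordLess" using assms(2) ordLeq_ordLess_trans by blast
qed

lemma BL_kappa_DM_subset_principal:
  assumes "complete_lattice_ord TYPE('a::semilattice_inf)" "kappa_frame \<kappa> TYPE('a)"
  shows "(BL_kappa_DM \<kappa> :: 'a set set) \<subseteq> range (\<lambda>a. {..a})"
proof
  fix I :: "'a set"
  assume "I \<in> BL_kappa_DM \<kappa>"
  then show "I \<in> range (\<lambda>a. {..a})"
  proof (induction rule: BL_kappa_DM.induct)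
    case (base I)
    then show ?case using assms(1) complete_lattice_ord_iff_DM_subset by blast
  next
    case top
    then show ?case using assms(1) complete_lattice_ord_iff_DM_subset UNIV_in_DM by blast
  next
    case (meet I J)
    then obtain a b where "I = {..a}" "J = {..b}" by blast
    then have "I \<inter> J = {..inf a b}" by auto
    then show ?case by blast
  next
    case (join \<F>)
    have "\<F> \<subseteq> range (\<lambda>a. {..a})" using join.IH by blast
    then obtain S where S: "\<F> = (\<lambda>a. {..a}) ` S" "(card_of S, \<kappa>) \<in> ordLess"
      using principal_family_card_of_ordLess \<open>(card_of \<F>, \<kappa>) \<in> ordLess\<close> by blast
    show ?case
      using assms(2) S unfolding kappa_frame_iff_BL_Join_atMost by simp
  qed
qed

theorem theorem4p14:
  fixes \<kappa> :: "'k rel"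
  assumes "Cinfinite \<kappa>" and "regularCard \<kappa>"
  shows "(complete_lattice_ord TYPE('a::semilattice_inf) \<and> kappa_frame \<kappa> TYPE('a))
     \<longleftrightarrow> (BL_kappa_DM \<kappa> :: 'a set set) = range (\<lambda>a. {..a})"
proof
  assume "complete_lattice_ord TYPE('a) \<and> kappa_frame \<kappa> TYPE('a)"
  moreover have "range (\<lambda>a. {..a}) \<subseteq> (BL_kappa_DM \<kappa> :: 'a set set)"
    using BL_kappa_DM.base[OF atMost_in_DM] by blast
  ultimately show "(BL_kappa_DM \<kappa> :: 'a set set) = range (\<lambda>a. {..a})"
    using BL_kappa_DM_subset_principal by blast
next
  assume principal: "(BL_kappa_DM \<kappa> :: 'a set set) = range (\<lambda>a. {..a})"
  have "complete_lattice_ord TYPE('a)"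
    using principal BL_kappa_DM.base complete_lattice_ord_iff_DM_subset by blast
  moreover have "kappa_frame \<kappa> TYPE('a)"
    unfolding kappa_frame_iff_BL_Join_atMost
  proof (intro allI impI)
    fix S :: "'a set"
    assume "(card_of S, \<kappa>) \<in> ordLess"
    then have "BL_Join ((\<lambda>a. {..a}) ` S) \<in> (BL_kappa_DM \<kappa> :: 'a set set)"
      using card_of_atMost_image_ordLess
      by (intro BL_kappa_DM.join) (auto intro: BL_kappa_DM.base atMost_in_DM)
    then show "BL_Join ((\<lambda>a. {..a}) ` S) \<in> range (\<lambda>a. {..a})" using principal by blast
  qed
  ultimately show "complete_lattice_ord TYPE('a) \<and> kappa_frame \<kappa> TYPE('a)" by blast
qed

end
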